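(* Let $i\in\{1,2\}$ and let \[ F_i(x,q)=\sum_{\lambda\in\mathcal{S}}x^{\ell(\lambda)}q^{|\lambda|_i}, \] where $\mathcal{S}$ is the set of strict partitions. Then \[ q^{3}F_i(x,q) = (1+q^{3}-xq^{3}+xq^{6}+x^{2}q^{7}+x^{2}q^{8})\,F_i(xq^{3},q) -(1-xq^3)(1+xq^6)(1-x^2q^9)\,F_i(xq^{6},q). \]
   Context: A strict partition is a partition with distinct parts (including the empty partition); $\ell(\lambda)$ denotes its number of parts (rows). Identify $\lambda$ with its Young diagram; the box in row $j$ and column $k$ has residue $k-j \bmod 2$. For $i\in\{1,2\}$, $|\lambda|_i$ is the number of boxes of $\lambda$, where boxes whose residue is congruent to $i$ modulo $2$ are counted twice (so for $i=1$ boxes with $k-j$ odd count twice, for $i=2$ boxes with $k-j$ even count twice). *)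

theory Defs
  imports "HOL-Analysis.Analysis"
begin

text \<open>A strict partition is represented by the list of its parts in strictly
decreasing order, all parts positive (the empty list is the empty partition).
The number of parts is the length of the list.\<close>

definition strict_partitions :: "nat list set" where
  "strict_partitions = {lam. sorted_wrt (>) lam \<and> (\<forall>p\<in>set lam. 0 < p)}"

text \<open>Weighted size: row j (1-based) and column k (1-based) gives the box with
residue k - j mod 2; boxes whose residue is congruent to i mod 2 count twice.\<close>

definition wsize :: "nat \<Rightarrow> nat list \<Rightarrow> nat" where
  "wsize i lam = (\<Sum>j<length lam. \<Sum>k\<in>{1..lam ! j}.
      (if (int k - int (j + 1)) mod 2 = int i mod 2 then 2 else 1))"

text \<open>The generating function, as an (absolutely convergent for norm q < 1) sum.\<close>

definition Fgen :: "nat \<Rightarrow> complex \<Rightarrow> complex \<Rightarrow> complex" where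
  "Fgen i x q = (\<Sum>\<^sub>\<infinity>lam\<in>strict_partitions. x ^ length lam * q ^ wsize i lam)"

end

theory Submission
  imports Defs
begin

text \<open>Every strict partition is obtained in exactly one way from a strict partition \<open>\<mu>\<close>
by adding 2 to each part and then appending one of the tails \<open>[]\<close>, \<open>[2]\<close>, \<open>[1]\<close>, \<open>[2,1]\<close>.
Adding two columns to a row adds one box of each residue, so it multiplies the weight
by \<open>q\<^sup>3\<close>; the weight of an appended part 1 depends only on the parity of its row.
Splitting \<open>F\<^sub>i\<close> according to the parity of \<open>\<ell>(\<lambda>) + i\<close> into \<open>U + V\<close> therefore gives a
first-order linear system expressing \<open>U(x), V(x)\<close> through \<open>U(xq\<^sup>3), V(xq\<^sup>3)\<close>;
iterating it once and eliminating \<open>U, V\<close> yields the stated relation.\<close>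

definition row_weight :: "nat \<Rightarrow> nat \<Rightarrow> nat \<Rightarrow> nat" where
  "row_weight i j L = (\<Sum>k\<in>{1..L}. if (int k - int (j + 1)) mod 2 = int i mod 2 then 2 else 1)"
  \<comment> \<open>a row of length \<open>L\<close> at the 0-based position \<open>j\<close>\<close>

lemma wsize_eq_sum_row_weight: "wsize i lam = (\<Sum>j<length lam. row_weight i j (lam ! j))"
  unfolding wsize_def row_weight_def by simp

lemma row_weight_Suc_Suc: "row_weight i j (Suc (Suc L)) = row_weight i j L + 3"
proof -
  have "{1..Suc (Suc L)} = insert (Suc (Suc L)) (insert (Suc L) {1..L})" by auto
  then show ?thesis unfolding row_weight_def by simp presburger
qed

lemma row_weight_Suc_0: "row_weight i j (Suc 0) = (if even (i + j) then 2 else 1)"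
  unfolding row_weight_def by simp presburger

lemma row_weight_2: "row_weight i j 2 = 3"
  using row_weight_Suc_Suc[of i j 0] by (simp add: row_weight_def numeral_2_eq_2)

lemma row_weight_ge: "L \<le> row_weight i j L"
proof -
  have "(\<Sum>k\<in>{1..L}. 1) \<le> row_weight i j L"
    unfolding row_weight_def by (rule sum_mono) auto
  then show ?thesis by simp
qed

lemma wsize_ge_sum_list: "sum_list lam \<le> wsize i lam"
  unfolding wsize_eq_sum_row_weight sum_list_sum_nth atLeast0LessThan
  by (rule sum_mono) (rule row_weight_ge)

lemma wsize_snoc: "wsize i (xs @ [y]) = wsize i xs + row_weight i (length xs) y"
  unfolding wsize_eq_sum_row_weight by (simp add: nth_append)

lemma wsize_append:
  "wsize i (xs @ ys) = wsize i xs + (\<Sum>j<length ys. row_weight i (length xs + j) (ys ! j))"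
proof (induction ys rule: rev_induct)
  case (snoc y ys)
  then show ?case
    unfolding append_assoc[symmetric] wsize_snoc by (simp add: nth_append)
qed simp

lemma wsize_map_add_2: "wsize i (map (\<lambda>p. p + 2) mu) = wsize i mu + 3 * length mu"
  unfolding wsize_eq_sum_row_weight by (simp add: row_weight_Suc_Suc sum.distrib)

lemma strict_partitions_iff:
  "lam \<in> strict_partitions \<longleftrightarrow> sorted_wrt (>) lam \<and> (\<forall>p\<in>set lam. 0 < p)"
  unfolding strict_partitions_def by simp

lemma strict_partitions_distinct: "lam \<in> strict_partitions \<Longrightarrow> distinct lam"
  unfolding strict_partitions_iff by (induction lam) auto

lemma strict_partitions_parts_le_2:
  "{c \<in> strict_partitions. \<forall>p\<in>set c. p \<le> 2} = {[], [2], [1], [2, 1]}"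
proof (intro equalityI subsetI)
  fix c assume "c \<in> {c \<in> strict_partitions. \<forall>p\<in>set c. p \<le> 2}"
  then have c: "sorted_wrt (>) c" "set c \<subseteq> {1, 2}"
    unfolding strict_partitions_iff by fastforce+
  show "c \<in> {[], [2], [1], [2, 1]}"
  proof (cases c)
    case (Cons a r)
    show ?thesis
    proof (cases r)
      case (Cons b s)
      then have "s = []" using c \<open>c = a # r\<close> by (cases s) auto
      then show ?thesis using c \<open>c = a # r\<close> Cons by auto
    qed (use c \<open>c = a # r\<close> in auto)
  qed simp
qed (auto simp: strict_partitions_iff)

lemma shift_append_in_strict_partitions:
  assumes "mu \<in> strict_partitions" and "c \<in> {[], [2], [1], [2, 1]}"
  shows "map (\<lambda>p. p + 2) mu @ c \<in> strict_partitions"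
  using assms unfolding strict_partitions_iff
  by (auto simp: sorted_wrt_append sorted_wrt_map)

lemma shift_append_inject:
  assumes "mu \<in> strict_partitions" "mu' \<in> strict_partitions"
    and "\<forall>p\<in>set c. p \<le> 2" "\<forall>p\<in>set c'. p \<le> 2"
    and eq: "map (\<lambda>p. p + 2) mu @ c = map (\<lambda>p. p + 2) mu' @ c'"
  shows "mu = mu' \<and> c = c'"
proof -
  have small: "filter (\<lambda>p. p \<le> 2) (map (\<lambda>p. p + 2) nu @ d) = d"
    if "nu \<in> strict_partitions" "\<forall>p\<in>set d. p \<le> 2" for nu d
    using that by (auto simp: strict_partitions_iff filter_empty_conv)
  have "c = c'" using small[OF assms(1,3)] small[OF assms(2,4)] eq by metis
  with eq have "map (\<lambda>p. p + 2) mu = map (\<lambda>p. p + 2) mu'" by simp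
  then show ?thesis using \<open>c = c'\<close> by (simp add: inj_map_eq_map inj_def)
qed

lemma strict_partition_decompose:
  assumes "lam \<in> strict_partitions"
  obtains mu c where "mu \<in> strict_partitions" "c \<in> {[], [2], [1], [2, 1]}"
    "lam = map (\<lambda>p. p + 2) mu @ c"
proof -
  define big where "big = takeWhile (\<lambda>p. 2 < p) lam"
  define c where "c = dropWhile (\<lambda>p. 2 < p) lam"
  define mu where "mu = map (\<lambda>p. p - 2) big"
  have lam: "sorted_wrt (>) lam" "\<forall>p\<in>set lam. 0 < p"
    using assms unfolding strict_partitions_iff by auto
  have big: "sorted_wrt (>) big" "\<forall>p\<in>set big. 2 < p"
    unfolding big_def using lam(1) by (auto dest: set_takeWhileD)
  have "sorted_wrt (\<lambda>a b. b - 2 < a - 2) big"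
    by (rule sorted_wrt_mono_rel[OF _ big(1)]) (use big(2) in auto)
  then have "mu \<in> strict_partitions"
    using big(2) unfolding mu_def strict_partitions_iff by (auto simp: sorted_wrt_map)
  moreover have "map (\<lambda>p. p + 2) mu = big"
    unfolding mu_def using big(2) by (induction big) auto
  moreover have "c \<in> {[], [2], [1], [2, 1]}"
  proof (cases c)
    case (Cons d r)
    have "\<not> 2 < d" using hd_dropWhile[of "\<lambda>p. 2 < p" lam] Cons unfolding c_def by simp
    moreover have "sorted_wrt (>) c" unfolding c_def using lam(1) by simp
    ultimately have "\<forall>p\<in>set c. p \<le> 2" using Cons by auto
    moreover have "\<forall>p\<in>set c. 0 < p" using lam(2) unfolding c_def by (auto dest: set_dropWhileD)
    ultimately show ?thesis
      using \<open>sorted_wrt (>) c\<close> unfolding strict_partitions_parts_le_2[symmetric] strict_partitions_iff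
      by blast
  qed simp
  moreover have "lam = big @ c" unfolding big_def c_def by simp
  ultimately show ?thesis using that by blast
qed

lemma has_sum_strict_partitions_decompose:
  fixes f :: "nat list \<Rightarrow> 'a::topological_comm_monoid_add"
  assumes "\<And>c. c \<in> {[], [2], [1], [2, 1]} \<Longrightarrow>
    ((\<lambda>mu. f (map (\<lambda>p. p + 2) mu @ c)) has_sum s c) {mu \<in> strict_partitions. P (length mu + length c)}"
  shows "(f has_sum (\<Sum>c\<in>{[], [2], [1], [2, 1]}. s c)) {lam \<in> strict_partitions. P (length lam)}"
proof -
  define tails :: "nat list set" where "tails = {[], [2], [1], [2, 1]}"
  define A where "A c = {mu \<in> strict_partitions. P (length mu + length c)}" for c :: "nat list"
  define B where "B c = (\<lambda>mu. map (\<lambda>p. p + 2) mu @ c) ` A c" for c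
  have small: "\<forall>p\<in>set c. p \<le> 2" if "c \<in> tails" for c
    using that unfolding tails_def by auto
  have piece: "(f has_sum s c) (B c)" if "c \<in> tails" for c
  proof -
    have inj: "inj_on (\<lambda>mu. map (\<lambda>p. p + 2) mu @ c) (A c)"
      by (rule inj_onI) (use shift_append_inject small[OF that] in \<open>simp add: A_def\<close>)
    moreover have "((\<lambda>mu. f (map (\<lambda>p. p + 2) mu @ c)) has_sum s c) (A c)"
      using assms that unfolding A_def tails_def by simp
    ultimately show ?thesis
      unfolding B_def by (simp add: has_sum_reindex comp_def)
  qed
  have disjoint: "B c \<inter> B c' = {}" if "c \<in> tails" "c' \<in> tails" "c \<noteq> c'" for c c'
    using shift_append_inject[OF _ _ small[OF that(1)] small[OF that(2)]] that(3)
    unfolding B_def A_def by blast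
  have "{lam \<in> strict_partitions. P (length lam)} = (\<Union>c\<in>tails. B c)"
  proof (intro equalityI subsetI)
    fix lam assume lam: "lam \<in> {lam \<in> strict_partitions. P (length lam)}"
    then obtain mu c where "mu \<in> strict_partitions" "c \<in> tails" "lam = map (\<lambda>p. p + 2) mu @ c"
      unfolding tails_def by (blast elim: strict_partition_decompose)
    with lam show "lam \<in> (\<Union>c\<in>tails. B c)" unfolding B_def A_def by auto
  next
    fix lam assume "lam \<in> (\<Union>c\<in>tails. B c)"
    then obtain c mu where "c \<in> tails" "mu \<in> A c" "lam = map (\<lambda>p. p + 2) mu @ c"
      unfolding B_def by blast
    then show "lam \<in> {lam \<in> strict_partitions. P (length lam)}"
      using shift_append_in_strict_partitions unfolding A_def tails_def by auto
  qed
  then show ?thesis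
    using sum_has_sum[where A = tails and f = f and s = s and B = B] piece disjoint unfolding tails_def by simp
qed

lemma sum_prod_le_exp_suminf:
  fixes a :: "nat \<Rightarrow> real"
  assumes nonneg: "\<And>k. 0 \<le> a k" and "summable a"
    and "finite F" and "\<And>S. S \<in> F \<Longrightarrow> finite S"
  shows "(\<Sum>S\<in>F. \<Prod>k\<in>S. a k) \<le> exp (\<Sum>k. a k)"
proof -
  have "finite (\<Union>F)" using assms(3,4) by blast
  then obtain N where N: "\<Union>F \<subseteq> {..<N}" by (auto simp: finite_nat_set_iff_bounded)
  have "(\<Sum>S\<in>F. \<Prod>k\<in>S. a k) \<le> (\<Sum>S\<in>Pow {..<N}. \<Prod>k\<in>S. a k)"
    by (rule sum_mono2) (use N nonneg in \<open>auto intro: prod_nonneg\<close>)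
  also have "\<dots> = (\<Prod>k<N. a k + 1)"
    by (subst prod_add) auto
  also have "\<dots> \<le> (\<Prod>k<N. exp (a k))"
    by (rule prod_mono) (use nonneg in \<open>auto simp: add.commute add_nonneg_nonneg\<close>)
  also have "\<dots> = exp (\<Sum>k<N. a k)"
    by (simp add: exp_sum)
  also have "\<dots> \<le> exp (\<Sum>k. a k)"
    using sum_le_suminf[OF assms(2)] nonneg by simp
  finally show ?thesis .
qed

lemma inj_on_set_strict_partitions: "inj_on set strict_partitions"
proof (rule inj_onI)
  fix xs ys assume "xs \<in> strict_partitions" "ys \<in> strict_partitions" "set xs = set ys"
  then have "sorted_wrt (<) (rev xs)" "sorted_wrt (<) (rev ys)" "set (rev xs) = set (rev ys)"
    unfolding strict_partitions_iff by (auto simp: sorted_wrt_rev)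
  then have "rev xs = rev ys"
    by (intro sorted_distinct_set_unique) (auto simp: strict_sorted_iff)
  then show "xs = ys" by simp
qed

text \<open>Since \<open>|\<lambda>|\<^sub>i \<ge> |\<lambda>|\<close>, the term of \<open>\<lambda>\<close> is at most the product of \<open>c \<bar>q\<bar>\<^sup>k\<close> over the
parts \<open>k\<close> of \<open>\<lambda>\<close>, where \<open>c = max 1 \<bar>x\<bar>\<close>; as a strict partition is determined by its set
of parts, every finite partial sum is then bounded by \<open>\<Prod>\<^sub>k (1 + c \<bar>q\<bar>\<^sup>k)\<close>.\<close>
lemma summable_on_strict_partitions:
  fixes x q :: complex
  assumes "norm q < 1"
  shows "(\<lambda>lam. x ^ length lam * q ^ wsize i lam) summable_on strict_partitions"
proof -
  define c where "c = max 1 (norm x)"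
  define a where "a k = c * norm q ^ k" for k
  have a_nonneg: "0 \<le> a k" for k unfolding a_def c_def by simp
  have "summable a"
    unfolding a_def using assms by (intro summable_mult summable_geometric) simp
  have term_le: "norm (x ^ length lam * q ^ wsize i lam) \<le> (\<Prod>k\<in>set lam. a k)"
    if "lam \<in> strict_partitions" for lam
  proof -
    have "norm (x ^ length lam * q ^ wsize i lam) = norm x ^ length lam * norm q ^ wsize i lam"
      by (simp add: norm_mult norm_power)
    also have "\<dots> \<le> c ^ length lam * norm q ^ sum_list lam"
      using assms wsize_ge_sum_list[of lam i]
      by (intro mult_mono power_mono power_decreasing) (auto simp: c_def)
    also have "\<dots> = (\<Prod>k\<in>set lam. a k)"
      using strict_partitions_distinct[OF that]
      by (simp add: a_def prod.distrib power_sum distinct_card distinct_sum_list_conv_Sum)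
    finally show ?thesis .
  qed
  have bound: "(\<Sum>lam\<in>F. norm (x ^ length lam * q ^ wsize i lam)) \<le> exp (\<Sum>k. a k)"
    if "finite F" "F \<subseteq> strict_partitions" for F
  proof -
    have "(\<Sum>lam\<in>F. norm (x ^ length lam * q ^ wsize i lam)) \<le> (\<Sum>lam\<in>F. \<Prod>k\<in>set lam. a k)"
      using that term_le by (intro sum_mono) auto
    also have "\<dots> = (\<Sum>S\<in>set ` F. \<Prod>k\<in>S. a k)"
      using inj_on_subset[OF inj_on_set_strict_partitions that(2)] by (simp add: sum.reindex)
    also have "\<dots> \<le> exp (\<Sum>k. a k)"
      using that(1) by (intro sum_prod_le_exp_suminf a_nonneg \<open>summable a\<close>) auto
    finally show ?thesis .
  qed
  have "(\<lambda>lam. norm (x ^ length lam * q ^ wsize i lam)) summable_on strict_partitions"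
    by (rule nonneg_bdd_above_summable_on) (use bound in \<open>auto intro!: bdd_aboveI\<close>)
  then show ?thesis by (rule abs_summable_summable)
qed

definition Fgen_parity :: "nat \<Rightarrow> bool \<Rightarrow> complex \<Rightarrow> complex \<Rightarrow> complex" where
  "Fgen_parity i b x q =
    (\<Sum>\<^sub>\<infinity>lam\<in>{lam \<in> strict_partitions. even (length lam + i) = b}. x ^ length lam * q ^ wsize i lam)"

lemma has_sum_Fgen_parity:
  assumes "norm q < 1"
  shows "((\<lambda>lam. x ^ length lam * q ^ wsize i lam) has_sum Fgen_parity i b x q)
    {lam \<in> strict_partitions. even (length lam + i) = b}"
  unfolding Fgen_parity_def
  by (rule has_sum_infsum, rule summable_on_subset_banach[OF summable_on_strict_partitions[OF assms]]) auto

lemma Fgen_eq_Fgen_parity: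
  assumes "norm q < 1"
  shows "Fgen i x q = Fgen_parity i True x q + Fgen_parity i False x q"
proof -
  have "((\<lambda>lam. x ^ length lam * q ^ wsize i lam) has_sum
      (Fgen_parity i True x q + Fgen_parity i False x q))
      ({lam \<in> strict_partitions. even (length lam + i) = True}
        \<union> {lam \<in> strict_partitions. even (length lam + i) = False})"
    by (rule has_sum_Un_disjoint[OF has_sum_Fgen_parity[OF assms] has_sum_Fgen_parity[OF assms]]) auto
  moreover have "{lam \<in> strict_partitions. even (length lam + i) = True}
      \<union> {lam \<in> strict_partitions. even (length lam + i) = False} = strict_partitions"
    by auto
  ultimately show ?thesis unfolding Fgen_def by (simp add: infsumI)
qed

lemma term_shift_append:
  fixes x q :: "'a::comm_monoid_mult"
  shows "x ^ length (map (\<lambda>p. p + 2) mu @ c) * q ^ wsize i (map (\<lambda>p. p + 2) mu @ c) =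
    x ^ length c * q ^ (\<Sum>j<length c. row_weight i (length mu + j) (c ! j))
      * ((x * q ^ 3) ^ length mu * q ^ wsize i mu)"
  unfolding wsize_append wsize_map_add_2 length_append length_map power_add power_mult_distrib
    power_mult[of q 3]
  by (simp add: ac_simps)

lemma Fgen_parity_recurrence:
  assumes q: "norm q < 1"
  shows "Fgen_parity i b x q =
    (1 + x^2 * q^(if b then 4 else 5)) * Fgen_parity i b (x * q^3) q
    + x * (q^(if b then 1 else 2) + q^3) * Fgen_parity i (\<not> b) (x * q^3) q"
proof -
  define g where "g y lam = y ^ length lam * q ^ wsize i lam" for y lam
  define F where "F b' = Fgen_parity i b' (x * q^3) q" for b'
  define s :: "nat list \<Rightarrow> complex" where
    "s c = (if c = [] then F b else if c = [2] then x * q^3 * F (\<not> b)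
      else if c = [1] then x * q^(if b then 1 else 2) * F (\<not> b)
      else x^2 * q^(if b then 4 else 5) * F b)" for c
  have piece: "((\<lambda>mu. g x (map (\<lambda>p. p + 2) mu @ c)) has_sum k * F b')
      {mu \<in> strict_partitions. even (length mu + length c + i) = b}"
    if set_eq: "{mu \<in> strict_partitions. even (length mu + length c + i) = b}
        = {mu \<in> strict_partitions. even (length mu + i) = b'}"
    and term_eq: "\<And>mu. even (length mu + i) = b' \<Longrightarrow> g x (map (\<lambda>p. p + 2) mu @ c) = k * g (x * q^3) mu"
    for c k b'
  proof -
    have "((\<lambda>mu. k * g (x * q^3) mu) has_sum k * F b') {mu \<in> strict_partitions. even (length mu + i) = b'}"
      unfolding g_def F_def by (rule has_sum_cmult_right[OF has_sum_Fgen_parity[OF q]])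
    then show ?thesis
      unfolding set_eq by (rule has_sum_cong[THEN iffD1, rotated]) (metis (mono_tags) mem_Collect_eq term_eq)
  qed
  have "((\<lambda>mu. g x (map (\<lambda>p. p + 2) mu @ c)) has_sum s c)
      {mu \<in> strict_partitions. even (length mu + length c + i) = b}"
    if "c \<in> {[], [2], [1], [2, 1]}" for c
    using that
  proof (elim insertE emptyE)
    assume c: "c = []"
    have "((\<lambda>mu. g x (map (\<lambda>p. p + 2) mu @ [])) has_sum 1 * F b)
        {mu \<in> strict_partitions. even (length mu + length ([] :: nat list) + i) = b}"
      by (rule piece, unfold g_def term_shift_append) auto
    then show ?thesis using c by (simp add: s_def)
  next
    assume c: "c = [2]"
    have "((\<lambda>mu. g x (map (\<lambda>p. p + 2) mu @ [2])) has_sum x * q^3 * F (\<not> b))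
        {mu \<in> strict_partitions. even (length mu + length [2 :: nat] + i) = b}"
      by (rule piece, unfold g_def term_shift_append) (auto simp: row_weight_2)
    then show ?thesis using c by (simp add: s_def)
  next
    assume c: "c = [1]"
    have "((\<lambda>mu. g x (map (\<lambda>p. p + 2) mu @ [1])) has_sum x * q^(if b then 1 else 2) * F (\<not> b))
        {mu \<in> strict_partitions. even (length mu + length [1 :: nat] + i) = b}"
      by (rule piece, unfold g_def term_shift_append) (auto simp: row_weight_Suc_0)
    then show ?thesis using c by (simp add: s_def)
  next
    assume c: "c = [2, 1]"
    have "((\<lambda>mu. g x (map (\<lambda>p. p + 2) mu @ [2, 1])) has_sum x^2 * q^(if b then 4 else 5) * F b)
        {mu \<in> strict_partitions. even (length mu + length [2, 1 :: nat] + i) = b}"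
      by (rule piece, unfold g_def term_shift_append) (auto simp: row_weight_Suc_0 row_weight_2 power2_eq_square)
    then show ?thesis using c by (simp add: s_def)
  qed
  from has_sum_strict_partitions_decompose[where P = "\<lambda>n. even (n + i) = b", OF this]
  have "(g x has_sum F b + x * q^3 * F (\<not> b) + x * q^(if b then 1 else 2) * F (\<not> b)
      + x^2 * q^(if b then 4 else 5) * F b) {lam \<in> strict_partitions. even (length lam + i) = b}"
    by (simp add: s_def add.assoc)
  then have "Fgen_parity i b x q = F b + x * q^3 * F (\<not> b) + x * q^(if b then 1 else 2) * F (\<not> b)
      + x^2 * q^(if b then 4 else 5) * F b"
    unfolding Fgen_parity_def g_def by (rule infsumI)
  then show ?thesis unfolding F_def by (simp add: algebra_simps)
qed

theorem mainTheorem5: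
  fixes i :: nat and x q :: complex
  assumes "i \<in> {1, 2}" and "norm q < 1"
  shows "q ^ 3 * Fgen i x q =
      (1 + q^3 - x * q^3 + x * q^6 + x^2 * q^7 + x^2 * q^8) * Fgen i (x * q^3) q
      - (1 - x * q^3) * (1 + x * q^6) * (1 - x^2 * q^9) * Fgen i (x * q^6) q"
proof -
  define U where "U y = Fgen_parity i True y q" for y
  define V where "V y = Fgen_parity i False y q" for y
  have U: "U y = (1 + y^2 * q^4) * U (y * q^3) + y * (q + q^3) * V (y * q^3)" for y
    using Fgen_parity_recurrence[OF assms(2), of i True y] unfolding U_def V_def by simp
  have V: "V y = (1 + y^2 * q^5) * V (y * q^3) + y * (q^2 + q^3) * U (y * q^3)" for y
    using Fgen_parity_recurrence[OF assms(2), of i False y] unfolding U_def V_def by simp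
  have F: "Fgen i y q = U y + V y" for y
    unfolding U_def V_def by (rule Fgen_eq_Fgen_parity[OF assms(2)])
  have shift: "x * q^3 * q^3 = x * q^6" by (simp add: power_add[symmetric] mult.assoc)
  show ?thesis
    unfolding F U[of x] V[of x] U[of "x * q^3"] V[of "x * q^3"] shift by algebra
qed

end
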